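(* Every simple undirected graph $G$ is the intersection graph of an exactly hittable hypergraph $\mathcal{X}=(\mathcal{U},\mathcal{F})$. Further, if $G$ is a connected chordal graph, then $G$ is the intersection graph of an exactly hittable family of subtrees of a tree.
   Context: The intersection graph of a family $\mathcal{F}$ of sets has one vertex $v_F$ for each $F\in\mathcal{F}$, with $v_{F_i}v_{F_j}$ an edge iff $F_i\cap F_j\neq\emptyset$. A hypergraph (set system) $(\mathcal{U},\mathcal{F})$ is exactly hittable if there is $T\subseteq\mathcal{U}$ with $|T\cap F|=1$ for all $F\in\mathcal{F}$; for a family of subtrees of a tree, exact hittability means there is a set $T$ of tree nodes meeting every subtree in exactly one node. A chordal graph is a graph with no induced cycle of length at least $4$. *)

theory Defs
  imports Main
begin

definition simple_graph :: "'a set \<Rightarrow> ('a \<Rightarrow> 'a \<Rightarrow> bool) \<Rightarrow> bool" where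
  "simple_graph V E \<longleftrightarrow> finite V \<and>
     (\<forall>u v. E u v \<longrightarrow> u \<in> V \<and> v \<in> V \<and> u \<noteq> v \<and> E v u)"

definition is_walk :: "('a \<Rightarrow> 'a \<Rightarrow> bool) \<Rightarrow> 'a list \<Rightarrow> bool" where
  "is_walk E xs \<longleftrightarrow> xs \<noteq> [] \<and> (\<forall>i. Suc i < length xs \<longrightarrow> E (xs ! i) (xs ! Suc i))"

definition connected_on :: "'a set \<Rightarrow> ('a \<Rightarrow> 'a \<Rightarrow> bool) \<Rightarrow> bool" where
  "connected_on V E \<longleftrightarrow>
     (\<forall>u\<in>V. \<forall>v\<in>V. \<exists>xs. is_walk E xs \<and> set xs \<subseteq> V \<and> hd xs = u \<and> last xs = v)"

definition is_cycle :: "('a \<Rightarrow> 'a \<Rightarrow> bool) \<Rightarrow> 'a list \<Rightarrow> bool" where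
  "is_cycle E xs \<longleftrightarrow> length xs \<ge> 3 \<and> distinct xs \<and> is_walk E xs \<and> E (last xs) (hd xs)"

definition induced_cycle :: "('a \<Rightarrow> 'a \<Rightarrow> bool) \<Rightarrow> 'a list \<Rightarrow> bool" where
  "induced_cycle E xs \<longleftrightarrow> is_cycle E xs \<and>
     (\<forall>i<length xs. \<forall>j<length xs. E (xs ! i) (xs ! j) \<longrightarrow>
        j = Suc i mod length xs \<or> i = Suc j mod length xs)"

definition chordal :: "'a set \<Rightarrow> ('a \<Rightarrow> 'a \<Rightarrow> bool) \<Rightarrow> bool" where
  "chordal V E \<longleftrightarrow> \<not> (\<exists>xs. set xs \<subseteq> V \<and> length xs \<ge> 4 \<and> induced_cycle E xs)"

definition is_tree :: "'b set \<Rightarrow> ('b \<Rightarrow> 'b \<Rightarrow> bool) \<Rightarrow> bool" where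
  "is_tree N A \<longleftrightarrow> simple_graph N A \<and> N \<noteq> {} \<and> connected_on N A \<and>
     \<not> (\<exists>xs. set xs \<subseteq> N \<and> is_cycle A xs)"

definition is_subtree :: "'b set \<Rightarrow> ('b \<Rightarrow> 'b \<Rightarrow> bool) \<Rightarrow> 'b set \<Rightarrow> bool" where
  "is_subtree N A S \<longleftrightarrow> S \<noteq> {} \<and> S \<subseteq> N \<and> connected_on S A"

definition exactly_hittable :: "'b set \<Rightarrow> 'b set set \<Rightarrow> bool" where
  "exactly_hittable U F \<longleftrightarrow> (\<exists>T. T \<subseteq> U \<and> (\<forall>X\<in>F. card (T \<inter> X) = 1))"

text \<open>G = (V,E) is (isomorphic to) the intersection graph of the family S ` V,
  the isomorphism being v \<mapsto> S v (injective, as F is a set of sets).\<close>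
definition is_intersection_graph_of :: "'a set \<Rightarrow> ('a \<Rightarrow> 'a \<Rightarrow> bool) \<Rightarrow> ('a \<Rightarrow> 'b set) \<Rightarrow> bool" where
  "is_intersection_graph_of V E S \<longleftrightarrow> inj_on S V \<and>
     (\<forall>u\<in>V. \<forall>v\<in>V. u \<noteq> v \<longrightarrow> (E u v \<longleftrightarrow> S u \<inter> S v \<noteq> {}))"

end

theory Submission
  imports Defs
begin

text \<open>For an arbitrary graph, represent a vertex v by its closed star: the singleton {v}
  together with the edges at v, each edge taken as a two-element set. Two stars meet exactly in
  a common edge, and the singletons form an exact hitting set.

  For a chordal graph, remove a simplicial vertex s (Dirac) and represent the rest by induction,
  keeping as invariant that every clique has a common tree node. The neighbours of s form a
  clique, so their subtrees share a node p. Attach a new leaf y at p and a new leaf z at y,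
  represent s by {y, z}, add y to the subtrees of the neighbours of s and z to the hitting set.\<close>

lemma is_walk_singleton [simp]: "is_walk E [x]"
  by (simp add: is_walk_def)

lemma not_is_walk_Nil [simp]: "\<not> is_walk E []"
  by (simp add: is_walk_def)

lemma is_walk_Cons_Cons [simp]: "is_walk E (x # y # r) \<longleftrightarrow> E x y \<and> is_walk E (y # r)"
  unfolding is_walk_def by (auto simp: less_Suc_eq_0_disj All_less_Suc2)

lemma is_walk_Cons: "is_walk E (x # r) \<longleftrightarrow> r = [] \<or> E x (hd r) \<and> is_walk E r"
  by (cases r) auto

lemma is_walk_append:
  "xs \<noteq> [] \<Longrightarrow> ys \<noteq> [] \<Longrightarrow>
     is_walk E (xs @ ys) \<longleftrightarrow> is_walk E xs \<and> is_walk E ys \<and> E (last xs) (hd ys)"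
  by (induction xs rule: induct_list012) (auto simp: is_walk_Cons)

lemma is_walk_mono:
  "is_walk E xs \<Longrightarrow> (\<And>u v. u \<in> set xs \<Longrightarrow> v \<in> set xs \<Longrightarrow> E u v \<Longrightarrow> E' u v) \<Longrightarrow> is_walk E' xs"
  by (induction xs rule: induct_list012) auto

lemma is_walk_rev: "(\<And>u v. E u v \<Longrightarrow> E v u) \<Longrightarrow> is_walk E xs \<Longrightarrow> is_walk E (rev xs)"
proof (induction xs rule: induct_list012)
  case (3 x y zs)
  then show ?case using is_walk_append[of "rev zs @ [y]" "[x]" E] by auto
qed auto

lemma is_walk_take: "is_walk E p \<Longrightarrow> 0 < n \<Longrightarrow> is_walk E (take n p)"
  unfolding is_walk_def by auto

lemma is_walk_drop: "is_walk E p \<Longrightarrow> j < length p \<Longrightarrow> is_walk E (drop j p)"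
  unfolding is_walk_def by (auto simp: add.commute[of j])

definition walk_within :: "('a \<Rightarrow> 'a \<Rightarrow> bool) \<Rightarrow> 'a set \<Rightarrow> 'a \<Rightarrow> 'a \<Rightarrow> 'a list \<Rightarrow> bool" where
  "walk_within E Z x y p \<longleftrightarrow> is_walk E p \<and> set p \<subseteq> Z \<and> hd p = x \<and> last p = y"

lemma walk_within_shortcut:
  assumes "walk_within E Z x y p" "i < j" "j < length p" "E (p ! i) (p ! j)"
  shows "walk_within E Z x y (take (Suc i) p @ drop j p)"
proof -
  have "p \<noteq> []" using assms(1) by (auto simp: walk_within_def)
  have "last (take (Suc i) p) = p ! i" "hd (drop j p) = p ! j"
    using assms by (simp_all add: take_Suc_conv_app_nth hd_drop_conv_nth)
  with assms have "is_walk E (take (Suc i) p @ drop j p)"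
    by (subst is_walk_append) (auto simp: walk_within_def is_walk_take is_walk_drop)
  moreover have "hd (take (Suc i) p @ drop j p) = hd p" using \<open>p \<noteq> []\<close> by (cases p) auto
  ultimately show ?thesis
    using assms by (auto simp: walk_within_def dest: in_set_takeD in_set_dropD)
qed

lemma walk_within_skip_loop:
  assumes "walk_within E Z x y p" "i < j" "j < length p" "p ! i = p ! j"
  shows "walk_within E Z x y (take (Suc i) p @ drop (Suc j) p)"
proof (cases "Suc j < length p")
  case True
  then have "E (p ! i) (p ! Suc j)"
    using assms unfolding walk_within_def is_walk_def by auto
  with True show ?thesis
    using walk_within_shortcut[OF assms(1), of i "Suc j"] assms(2) by simp
next
  case False
  then have "j = length p - 1" using assms(3) by simp
  moreover have "p \<noteq> []" using assms(3) by auto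
  ultimately have "p ! i = y"
    using assms by (auto simp: walk_within_def last_conv_nth)
  moreover have "hd (take (Suc i) p) = hd p" by (cases p) auto
  ultimately show ?thesis
    using assms False is_walk_take[of E p "Suc i"]
    by (auto simp: walk_within_def take_Suc_conv_app_nth dest: in_set_takeD)
qed

lemma walk_contains_induced_path:
  assumes "walk_within E Z x y p0"
  obtains p where "walk_within E Z x y p" "distinct p"
    "\<And>i j. i < j \<Longrightarrow> j < length p \<Longrightarrow> E (p ! i) (p ! j) \<Longrightarrow> j = Suc i"
proof -
  obtain p where p: "walk_within E Z x y p"
    and shortest: "\<And>q. walk_within E Z x y q \<Longrightarrow> length p \<le> length q"
    using ex_has_least_nat[of "walk_within E Z x y" p0 length] assms by blast
  have "distinct p"
  proof (rule ccontr)
    assume "\<not> distinct p"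
    then obtain i j where ij: "i < j" "j < length p" "p ! i = p ! j"
      by (auto simp: distinct_conv_nth) (metis linorder_neqE_nat)
    with shortest[OF walk_within_skip_loop[OF p ij]] show False by simp
  qed
  moreover have "j = Suc i" if ij: "i < j" "j < length p" "E (p ! i) (p ! j)" for i j
    using shortest[OF walk_within_shortcut[OF p ij]] ij by simp
  ultimately show ?thesis using that p by blast
qed

lemma is_walk_nonadjacent_length:
  assumes "is_walk E p" "hd p = x" "last p = y" "x \<noteq> y" "\<not> E x y"
  shows "3 \<le> length p"
proof -
  have "p \<noteq> [a] \<and> p \<noteq> [a, b] \<and> p \<noteq> []" for a b using assms by auto
  then show ?thesis by (cases p rule: remdups_adj.cases) (auto simp: Suc_le_eq)
qed

lemma induced_path_with_apex_induced_cycle: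
  assumes sym: "\<And>u v. E u v \<Longrightarrow> E v u" and irrefl: "\<And>u. \<not> E u u"
    and walk: "is_walk E p" "hd p = x" "last p = y" "distinct p"
    and chordless: "\<And>i j. i < j \<Longrightarrow> j < length p \<Longrightarrow> E (p ! i) (p ! j) \<Longrightarrow> j = Suc i"
    and "x \<noteq> y" "\<not> E x y"
    and apex: "a \<notin> set p" "E a x" "E a y" "\<And>v. v \<in> set p \<Longrightarrow> E a v \<Longrightarrow> v = x \<or> v = y"
  shows "4 \<le> length (p @ [a])" "induced_cycle E (p @ [a])"
proof -
  define n where "n = length p"
  have "p \<noteq> []" using walk by auto
  have first: "p ! 0 = x" using walk \<open>p \<noteq> []\<close> by (simp add: hd_conv_nth)
  have final: "p ! (n - 1) = y" using walk \<open>p \<noteq> []\<close> by (simp add: last_conv_nth n_def)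
  have "3 \<le> n"
    using is_walk_nonadjacent_length[OF walk(1-3) \<open>x \<noteq> y\<close> \<open>\<not> E x y\<close>] by (simp add: n_def)
  then show "4 \<le> length (p @ [a])" by (simp add: n_def)
  have cycle: "is_cycle E (p @ [a])"
    using \<open>3 \<le> n\<close> walk apex sym \<open>p \<noteq> []\<close> by (auto simp: is_cycle_def is_walk_append n_def)
  have apex_nbr: "k = 0 \<or> k = n - 1" if "k < n" "E a (p ! k)" for k
  proof -
    have "p ! k = p ! 0 \<or> p ! k = p ! (n - 1)"
      using apex(4)[of "p ! k"] that first final by (simp add: n_def)
    moreover have "p ! k = p ! m \<longleftrightarrow> k = m" if "m < n" for m
      using nth_eq_iff_index_eq[OF walk(4)] \<open>k < n\<close> that by (simp add: n_def)
    ultimately show ?thesis using \<open>3 \<le> n\<close> by auto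
  qed
  have nth: "(p @ [a]) ! k = (if k < n then p ! k else a)" if "k < Suc n" for k
    using that by (auto simp: nth_append n_def)
  have "j = Suc i mod Suc n \<or> i = Suc j mod Suc n"
    if ij: "i < Suc n" "j < Suc n" "E ((p @ [a]) ! i) ((p @ [a]) ! j)" for i j
  proof -
    consider "i < n" "j < n" | "i < n" "j = n" | "i = n" "j < n" | "i = n" "j = n"
      using ij by linarith
    then show ?thesis
    proof cases
      case 1
      then have "E (p ! i) (p ! j)" using ij nth by simp
      then have "i \<noteq> j" using irrefl by auto
      then show ?thesis using chordless[of i j] chordless[of j i] sym 1 \<open>E (p ! i) (p ! j)\<close>
        by (fastforce simp: n_def)
    next
      case 2
      then show ?thesis using apex_nbr[of i] ij nth sym \<open>3 \<le> n\<close> by auto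
    next
      case 3
      then show ?thesis using apex_nbr[of j] ij nth \<open>3 \<le> n\<close> by auto
    next
      case 4
      then show ?thesis using ij nth irrefl by simp
    qed
  qed
  with cycle show "induced_cycle E (p @ [a])" by (simp add: induced_cycle_def n_def)
qed

definition component :: "'a set \<Rightarrow> ('a \<Rightarrow> 'a \<Rightarrow> bool) \<Rightarrow> 'a \<Rightarrow> 'a set" where
  "component W E w = {v. \<exists>p. walk_within E W w v p}"

lemma component_subset: "component W E w \<subseteq> W"
  unfolding component_def walk_within_def is_walk_def by (auto dest!: last_in_set)

lemma self_in_component: "w \<in> W \<Longrightarrow> w \<in> component W E w"
  unfolding component_def walk_within_def by (auto intro!: exI[of _ "[w]"])

lemma component_step:
  assumes "c \<in> component W E w" "E c u" "u \<in> W"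
  shows "u \<in> component W E w"
proof -
  obtain p where p: "walk_within E W w c p" using assms(1) by (auto simp: component_def)
  then have "p \<noteq> []" by (auto simp: walk_within_def)
  with p assms have "walk_within E W w u (p @ [u])"
    by (auto simp: walk_within_def is_walk_append)
  then show ?thesis by (auto simp: component_def)
qed

lemma walk_in_component:
  assumes "walk_within E W w v p"
  shows "set p \<subseteq> component W E w"
proof
  fix u assume "u \<in> set p"
  then obtain k where k: "k < length p" "p ! k = u" by (auto simp: in_set_conv_nth)
  have "hd (take (Suc k) p) = hd p" by (cases p) auto
  moreover have "last (take (Suc k) p) = u" using k by (simp add: take_Suc_conv_app_nth)
  moreover have "is_walk E (take (Suc k) p)" using assms by (simp add: walk_within_def is_walk_take)
  ultimately have "walk_within E W w u (take (Suc k) p)"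
    using assms by (auto simp: walk_within_def dest: in_set_takeD)
  then show "u \<in> component W E w" by (auto simp: component_def)
qed

lemma connected_on_component:
  assumes sym: "\<And>u v. E u v \<Longrightarrow> E v u"
  shows "connected_on (component W E w) E"
  unfolding connected_on_def
proof (intro ballI)
  fix u v assume "u \<in> component W E w" "v \<in> component W E w"
  then obtain pu pv where pu: "walk_within E W w u pu" and pv: "walk_within E W w v pv"
    by (auto simp: component_def)
  have in_C: "set pu \<subseteq> component W E w" "set pv \<subseteq> component W E w"
    using walk_in_component[OF pu] walk_in_component[OF pv] by simp_all
  have "pu \<noteq> []" "pv \<noteq> []" using pu pv by (auto simp: walk_within_def)
  then obtain r where r: "pv = w # r" using pv by (cases pv) (auto simp: walk_within_def)
  have rev_pu: "is_walk E (rev pu)" "hd (rev pu) = u" "last (rev pu) = w"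
    using is_walk_rev[OF sym] pu \<open>pu \<noteq> []\<close> by (auto simp: walk_within_def hd_rev last_rev)
  show "\<exists>xs. is_walk E xs \<and> set xs \<subseteq> component W E w \<and> hd xs = u \<and> last xs = v"
  proof (cases "r = []")
    case True
    then show ?thesis
      using rev_pu in_C r pv by (intro exI[of _ "rev pu"]) (simp add: walk_within_def)
  next
    case False
    then have "is_walk E (rev pu @ r)"
      using rev_pu pv r \<open>pu \<noteq> []\<close> by (simp add: walk_within_def is_walk_append is_walk_Cons)
    then show ?thesis
      using rev_pu in_C r pv False \<open>pu \<noteq> []\<close>
      by (intro exI[of _ "rev pu @ r"]) (simp add: walk_within_def hd_append)
  qed
qed

definition clique :: "('a \<Rightarrow> 'a \<Rightarrow> bool) \<Rightarrow> 'a set \<Rightarrow> bool" where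
  "clique E K \<longleftrightarrow> (\<forall>u\<in>K. \<forall>w\<in>K. u \<noteq> w \<longrightarrow> E u w)"

definition simplicial :: "'a set \<Rightarrow> ('a \<Rightarrow> 'a \<Rightarrow> bool) \<Rightarrow> 'a \<Rightarrow> bool" where
  "simplicial V E s \<longleftrightarrow> clique E {u\<in>V. E s u}"

lemma chordal_subset: "chordal V E \<Longrightarrow> V' \<subseteq> V \<Longrightarrow> chordal V' E"
  by (auto simp: chordal_def)

lemma chordal_neighbours_of_component_adjacent:
  assumes sym: "\<And>u v. E u v \<Longrightarrow> E v u" and irrefl: "\<And>u. \<not> E u u"
    and "chordal V E" "a \<in> V" "C \<subseteq> V" "connected_on C E"
    and C_apart: "\<And>c. c \<in> C \<Longrightarrow> c \<noteq> a \<and> \<not> E a c"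
    and "x \<in> V" "y \<in> V" "x \<noteq> y" "E a x" "E a y"
    and "c \<in> C" "E x c" "d \<in> C" "E y d"
  shows "E x y"
proof (rule ccontr)
  assume "\<not> E x y"
  obtain q where q: "is_walk E q" "set q \<subseteq> C" "hd q = c" "last q = d"
    using \<open>connected_on C E\<close> \<open>c \<in> C\<close> \<open>d \<in> C\<close> unfolding connected_on_def by blast
  have "q \<noteq> []" using q by auto
  then have walk: "walk_within E (insert x (insert y C)) x y (x # q @ [y])"
    using q \<open>E x c\<close> \<open>E y d\<close> sym by (auto simp: walk_within_def is_walk_Cons is_walk_append)
  obtain p where "walk_within E (insert x (insert y C)) x y p" "distinct p"
    and chordless: "\<And>i j. i < j \<Longrightarrow> j < length p \<Longrightarrow> E (p ! i) (p ! j) \<Longrightarrow> j = Suc i"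
    by (rule walk_contains_induced_path[OF walk]) blast
  then have p: "is_walk E p" "hd p = x" "last p = y" "distinct p"
    and p_sub: "set p \<subseteq> insert x (insert y C)"
    by (auto simp: walk_within_def)
  have "a \<notin> set p" using p_sub C_apart irrefl \<open>E a x\<close> \<open>E a y\<close> by blast
  moreover have "v = x \<or> v = y" if "v \<in> set p" "E a v" for v
    using p_sub that C_apart by blast
  ultimately have "4 \<le> length (p @ [a])" "induced_cycle E (p @ [a])"
    using induced_path_with_apex_induced_cycle[OF sym irrefl p chordless]
      \<open>x \<noteq> y\<close> \<open>\<not> E x y\<close> \<open>E a x\<close> \<open>E a y\<close> by blast+
  moreover have "set (p @ [a]) \<subseteq> V" using p_sub assms by auto
  ultimately show False using \<open>chordal V E\<close> unfolding chordal_def by blast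
qed

lemma simplicial_if_neighbourhood_within:
  "simplicial V' E s \<Longrightarrow> {u\<in>V. E s u} \<subseteq> V' \<Longrightarrow> simplicial V E s"
  by (auto simp: simplicial_def clique_def)

text \<open>C is the component of w among the non-neighbours of a, and V' adds to it the
  neighbours of C; these are adjacent to a, and chordality makes them a clique.\<close>
lemma chordal_non_neighbour_separation:
  assumes sym: "\<And>u v. E u v \<Longrightarrow> E v u" and irrefl: "\<And>u. \<not> E u u"
    and "chordal V E" "a \<in> V" "w \<in> V" "w \<noteq> a" "\<not> E a w"
  obtains V' C where "V' \<subseteq> V" "a \<notin> V'" "w \<in> C" "C \<subseteq> V'" "clique E (V' - C)"
    "\<And>c. c \<in> C \<Longrightarrow> c \<noteq> a \<and> \<not> E a c"
    "\<And>c u. c \<in> C \<Longrightarrow> u \<in> V \<Longrightarrow> E c u \<Longrightarrow> u \<in> V'"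
proof -
  define W where "W = {v\<in>V. v \<noteq> a \<and> \<not> E a v}"
  define C where "C = component W E w"
  define X where "X = {x\<in>V. E a x \<and> (\<exists>c\<in>C. E x c)}"
  have "C \<subseteq> W" by (simp add: C_def component_subset)
  have "w \<in> C" using assms by (simp add: C_def W_def self_in_component)
  have "u \<in> C \<union> X" if "c \<in> C" "u \<in> V" "E c u" for c u
  proof (cases "E a u")
    case True
    then show ?thesis using that sym by (auto simp: X_def)
  next
    case False
    have "u \<noteq> a" using that \<open>C \<subseteq> W\<close> sym by (auto simp: W_def)
    with False that show ?thesis
      unfolding C_def by (auto simp: W_def intro: component_step)
  qed
  moreover have "clique E X"
    unfolding clique_def
  proof (intro ballI impI)
    fix x y assume "x \<in> X" "y \<in> X" "x \<noteq> y"
    then obtain c d where "c \<in> C" "E x c" "d \<in> C" "E y d" by (auto simp: X_def)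
    show "E x y"
    proof (rule chordal_neighbours_of_component_adjacent[OF sym irrefl \<open>chordal V E\<close> \<open>a \<in> V\<close>])
      show "connected_on C E" by (simp add: C_def connected_on_component[OF sym])
    qed (use \<open>C \<subseteq> W\<close> \<open>x \<in> X\<close> \<open>y \<in> X\<close> \<open>x \<noteq> y\<close> \<open>c \<in> C\<close> \<open>E x c\<close> \<open>d \<in> C\<close> \<open>E y d\<close>
        in \<open>auto simp: W_def X_def\<close>)
  qed
  then have "clique E (C \<union> X - C)" by (auto simp: clique_def)
  moreover have "C \<union> X \<subseteq> V" "a \<notin> C \<union> X"
    using \<open>C \<subseteq> W\<close> irrefl by (auto simp: W_def X_def)
  ultimately show ?thesis
    using that[of "C \<union> X" C] \<open>w \<in> C\<close> \<open>C \<subseteq> W\<close> by (auto simp: W_def)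
qed

text \<open>Dirac's lemma, strengthened so that the induction goes through.\<close>
lemma chordal_simplicial_nonadjacent:
  assumes sym: "\<And>u v. E u v \<Longrightarrow> E v u" and irrefl: "\<And>u. \<not> E u u"
  shows "finite V \<Longrightarrow> chordal V E \<Longrightarrow> a \<in> V \<Longrightarrow> w \<in> V \<Longrightarrow> w \<noteq> a \<Longrightarrow> \<not> E a w
    \<Longrightarrow> \<exists>s\<in>V. s \<noteq> a \<and> \<not> E a s \<and> simplicial V E s"
proof (induction "card V" arbitrary: V a w rule: less_induct)
  case less
  obtain V' C where "V' \<subseteq> V" "a \<notin> V'" "w \<in> C" "C \<subseteq> V'" and X: "clique E (V' - C)"
    and C_apart: "\<And>c. c \<in> C \<Longrightarrow> c \<noteq> a \<and> \<not> E a c"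
    and C_closed: "\<And>c u. c \<in> C \<Longrightarrow> u \<in> V \<Longrightarrow> E c u \<Longrightarrow> u \<in> V'"
    using chordal_non_neighbour_separation[OF sym irrefl less.prems(2-6)] by blast
  have smaller: "card V' < card V" "finite V'" "chordal V' E"
    using less.prems \<open>V' \<subseteq> V\<close> \<open>a \<notin> V'\<close>
    by (auto intro: psubset_card_mono finite_subset chordal_subset)
  have lift: "\<exists>s\<in>V. s \<noteq> a \<and> \<not> E a s \<and> simplicial V E s"
    if "s \<in> C" "simplicial V' E s" for s
  proof -
    have "simplicial V E s"
      using simplicial_if_neighbourhood_within[OF \<open>simplicial V' E s\<close>] C_closed \<open>s \<in> C\<close> by blast
    with \<open>s \<in> C\<close> C_apart \<open>C \<subseteq> V'\<close> \<open>V' \<subseteq> V\<close> show ?thesis by blast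
  qed
  consider "clique E V'" | x v where "x \<in> V' - C" "v \<in> V'" "v \<noteq> x" "\<not> E x v"
    | u v where "u \<in> V'" "v \<in> V'" "u \<noteq> v" "\<not> E u v"
      "\<forall>x\<in>V' - C. \<forall>v\<in>V'. v \<noteq> x \<longrightarrow> E x v"
    unfolding clique_def by blast
  then show ?case
  proof cases
    case 1
    then have "simplicial V' E w" by (auto simp: simplicial_def clique_def)
    with lift \<open>w \<in> C\<close> show ?thesis by blast
  next
    case 2
    then obtain s where "s \<in> V'" "s \<noteq> x" "\<not> E x s" "simplicial V' E s"
      using less.hyps[OF smaller _ 2(2-4)] by blast
    moreover have "s \<in> C"
      using X 2(1) calculation unfolding clique_def by (metis DiffI)
    ultimately show ?thesis using lift by blast
  next
    case 3
    then obtain s where "s \<in> V'" "s \<noteq> u" "\<not> E u s" "simplicial V' E s"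
      using less.hyps[OF smaller 3(1,2) 3(3)[symmetric] 3(4)] by blast
    moreover have "s \<in> C"
    proof (rule ccontr)
      assume "s \<notin> C"
      then have "E s u" using 3(1,5) \<open>s \<in> V'\<close> \<open>s \<noteq> u\<close> by auto
      with sym \<open>\<not> E u s\<close> show False by blast
    qed
    ultimately show ?thesis using lift by blast
  qed
qed

lemma chordal_has_simplicial:
  assumes sym: "\<And>u v. E u v \<Longrightarrow> E v u" and irrefl: "\<And>u. \<not> E u u"
    and "finite V" "chordal V E" "V \<noteq> {}"
  shows "\<exists>s\<in>V. simplicial V E s"
proof (cases "clique E V")
  case True
  then show ?thesis using \<open>V \<noteq> {}\<close> by (auto simp: simplicial_def clique_def)
next
  case False
  then obtain a w where "a \<in> V" "w \<in> V" "w \<noteq> a" "\<not> E a w" by (auto simp: clique_def)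
  then show ?thesis using chordal_simplicial_nonadjacent[OF sym irrefl assms(3,4)] by blast
qed

lemma connected_on_mono:
  assumes "connected_on S A" "\<And>u v. A u v \<Longrightarrow> A' u v"
  shows "connected_on S A'"
proof -
  have "is_walk A' xs" if "is_walk A xs" for xs using that by (rule is_walk_mono) (rule assms(2))
  with assms(1) show ?thesis unfolding connected_on_def by blast
qed

lemma connected_on_singleton: "connected_on {x} A"
  unfolding connected_on_def by (auto intro!: exI[of _ "[x]"])

lemma connected_on_insert:
  assumes conn: "connected_on S A" and "x \<in> S" "A x y" "A y x"
  shows "connected_on (insert y S) A"
proof -
  have from_y: "\<exists>xs. is_walk A xs \<and> set xs \<subseteq> insert y S \<and> hd xs = y \<and> last xs = v"
    if "v \<in> S" for v
  proof -
    obtain xs where "is_walk A xs" "set xs \<subseteq> S" "hd xs = x" "last xs = v"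
      using conn \<open>x \<in> S\<close> \<open>v \<in> S\<close> unfolding connected_on_def by blast
    moreover have "xs \<noteq> []" using \<open>is_walk A xs\<close> by auto
    ultimately show ?thesis using \<open>A y x\<close> by (intro exI[of _ "y # xs"]) (auto simp: is_walk_Cons)
  qed
  have to_y: "\<exists>xs. is_walk A xs \<and> set xs \<subseteq> insert y S \<and> hd xs = u \<and> last xs = y"
    if "u \<in> S" for u
  proof -
    obtain xs where "is_walk A xs" "set xs \<subseteq> S" "hd xs = u" "last xs = x"
      using conn \<open>x \<in> S\<close> \<open>u \<in> S\<close> unfolding connected_on_def by blast
    moreover have "xs \<noteq> []" using \<open>is_walk A xs\<close> by auto
    ultimately show ?thesis
      using \<open>A x y\<close> by (intro exI[of _ "xs @ [y]"]) (auto simp: is_walk_append)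
  qed
  have within_S: "\<exists>xs. is_walk A xs \<and> set xs \<subseteq> insert y S \<and> hd xs = u \<and> last xs = v"
    if "u \<in> S" "v \<in> S" for u v
    using conn that unfolding connected_on_def by blast
  show ?thesis
    unfolding connected_on_def
    using from_y to_y within_S by (auto intro!: exI[of _ "[y]"])
qed

definition add_edge :: "('b \<Rightarrow> 'b \<Rightarrow> bool) \<Rightarrow> 'b \<Rightarrow> 'b \<Rightarrow> 'b \<Rightarrow> 'b \<Rightarrow> bool" where
  "add_edge A x y = (\<lambda>u v. A u v \<or> (u = x \<and> v = y) \<or> (u = y \<and> v = x))"

lemma is_cycle_step:
  assumes "is_cycle E xs" "k < length xs"
  shows "E (xs ! k) (xs ! (Suc k mod length xs))"
proof (cases "Suc k < length xs")
  case True
  then show ?thesis using assms unfolding is_cycle_def is_walk_def by auto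
next
  case False
  then have "Suc k = length xs" using assms by simp
  then have "k = length xs - 1" "Suc k mod length xs = 0" by simp_all
  moreover have "xs \<noteq> []" using assms by auto
  ultimately show ?thesis
    using assms unfolding is_cycle_def by (simp add: last_conv_nth hd_conv_nth)
qed

lemma is_cycle_neighbours:
  assumes "is_cycle E xs" "k < length xs"
  obtains i j where "i < length xs" "j < length xs" "i \<noteq> j"
    "E (xs ! i) (xs ! k)" "E (xs ! k) (xs ! j)"
proof -
  define n where "n = length xs"
  have "3 \<le> n" using assms by (simp add: is_cycle_def n_def)
  define i where "i = (if k = 0 then n - 1 else k - 1)"
  have "i < n" using \<open>3 \<le> n\<close> assms(2) by (auto simp: i_def n_def)
  have "Suc i mod n = k" using \<open>3 \<le> n\<close> assms(2) by (auto simp: i_def n_def Suc_diff_Suc)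
  have "Suc k mod n < n" using \<open>3 \<le> n\<close> by simp
  have "i \<noteq> Suc k mod n"
  proof (cases "Suc k < n")
    case True
    then show ?thesis using \<open>3 \<le> n\<close> by (auto simp: i_def)
  next
    case False
    then have "Suc k = n" using assms(2) by (simp add: n_def)
    then show ?thesis using \<open>3 \<le> n\<close> by (auto simp: i_def)
  qed
  moreover have "E (xs ! i) (xs ! k)"
    using is_cycle_step[OF assms(1)] \<open>i < n\<close> \<open>Suc i mod n = k\<close> by (fastforce simp: n_def)
  moreover have "E (xs ! k) (xs ! (Suc k mod n))"
    using is_cycle_step[OF assms] by (simp add: n_def)
  ultimately show ?thesis using that \<open>i < n\<close> \<open>Suc k mod n < n\<close> by (simp add: n_def)
qed

lemma is_tree_add_leaf:
  assumes tree: "is_tree N A" and "x \<in> N" "y \<notin> N"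
  shows "is_tree (insert y N) (add_edge A x y)"
proof -
  let ?A = "add_edge A x y"
  have simple: "simple_graph N A" and conn: "connected_on N A"
    and acyclic: "\<not> (\<exists>xs. set xs \<subseteq> N \<and> is_cycle A xs)"
    using tree by (auto simp: is_tree_def)
  have "x \<noteq> y" using assms by auto
  have "simple_graph (insert y N) ?A"
    using simple \<open>x \<in> N\<close> \<open>x \<noteq> y\<close> unfolding simple_graph_def add_edge_def by auto
  moreover have "connected_on (insert y N) ?A"
    using connected_on_insert[OF connected_on_mono[OF conn] \<open>x \<in> N\<close>, of ?A y]
    by (simp add: add_edge_def)
  moreover have "\<not> is_cycle ?A xs" if "set xs \<subseteq> insert y N" for xs
  proof
    assume cycle: "is_cycle ?A xs"
    show False
    proof (cases "y \<in> set xs")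
      case True
      then obtain k where k: "k < length xs" "xs ! k = y" by (auto simp: in_set_conv_nth)
      obtain i j where "i < length xs" "j < length xs" "i \<noteq> j"
        "?A (xs ! i) (xs ! k)" "?A (xs ! k) (xs ! j)"
        using is_cycle_neighbours[OF cycle k(1)] .
      moreover have "\<not> A y v" "\<not> A v y" for v using simple \<open>y \<notin> N\<close> by (auto simp: simple_graph_def)
      ultimately have "xs ! i = xs ! j" using k(2) by (auto simp: add_edge_def)
      then show False using cycle \<open>i < length xs\<close> \<open>j < length xs\<close> \<open>i \<noteq> j\<close>
        by (simp add: is_cycle_def nth_eq_iff_index_eq)
    next
      case False
      then have "\<forall>u\<in>set xs. \<forall>v\<in>set xs. ?A u v \<longrightarrow> A u v" by (auto simp: add_edge_def)
      moreover have "xs \<noteq> []" using cycle by (auto simp: is_cycle_def)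
      ultimately have "is_cycle A xs"
        using cycle unfolding is_cycle_def by (auto intro: is_walk_mono)
      with False that acyclic show False by blast
    qed
  qed
  ultimately show ?thesis using tree by (auto simp: is_tree_def)
qed

lemma is_tree_singleton: "is_tree {x :: 'a} (\<lambda>_ _. False)"
proof -
  have no_cycle: "\<not> is_cycle (\<lambda>_ _. False) xs" for xs :: "'a list"
    by (cases xs) (auto simp: is_cycle_def)
  show ?thesis unfolding is_tree_def simple_graph_def
    by (simp add: connected_on_singleton no_cycle)
qed

definition subtree_model ::
    "'a set \<Rightarrow> ('a \<Rightarrow> 'a \<Rightarrow> bool) \<Rightarrow> 'b set \<Rightarrow> ('b \<Rightarrow> 'b \<Rightarrow> bool) \<Rightarrow> ('a \<Rightarrow> 'b set) \<Rightarrow> 'b set \<Rightarrow> bool"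
  where
  "subtree_model V E N A S T \<longleftrightarrow> is_tree N A \<and> (\<forall>v\<in>V. is_subtree N A (S v))
     \<and> is_intersection_graph_of V E S \<and> T \<subseteq> N \<and> (\<forall>v\<in>V. card (T \<inter> S v) = 1)
     \<and> (\<forall>K\<subseteq>V. clique E K \<longrightarrow> (\<exists>p\<in>N. \<forall>u\<in>K. p \<in> S u))"

lemma subtree_model_empty: "subtree_model {} E {x} (\<lambda>_ _. False) S {x}"
  by (simp add: subtree_model_def is_tree_singleton is_intersection_graph_of_def)

locale simplicial_extension =
  fixes V :: "'a set" and E :: "'a \<Rightarrow> 'a \<Rightarrow> bool"
    and N :: "'b set" and A :: "'b \<Rightarrow> 'b \<Rightarrow> bool" and S :: "'a \<Rightarrow> 'b set" and T :: "'b set"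
    and s :: 'a and p y z :: 'b
  assumes sym: "\<And>u v. E u v \<Longrightarrow> E v u"
    and model: "subtree_model (V - {s}) E N A S T"
    and simplicial: "simplicial V E s"
    and attach: "p \<in> N" "\<And>u. u \<in> V \<Longrightarrow> E s u \<Longrightarrow> p \<in> S u"
    and fresh: "y \<notin> N" "z \<notin> N" "y \<noteq> z"
begin

definition N' :: "'b set" where "N' = insert z (insert y N)"

definition A' :: "'b \<Rightarrow> 'b \<Rightarrow> bool" where "A' = add_edge (add_edge A p y) y z"

definition S' :: "'a \<Rightarrow> 'b set" where
  "S' u = (if u = s then {y, z} else if E s u then insert y (S u) else S u)"

definition T' :: "'b set" where "T' = insert z T"

lemma S_subset: "u \<in> V - {s} \<Longrightarrow> S u \<subseteq> N"
  using model by (auto simp: subtree_model_def is_subtree_def)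

lemma S'_other: "u \<in> V - {s} \<Longrightarrow> S' u = (if E s u then insert y (S u) else S u)"
  by (simp add: S'_def)

lemma fresh_notin_S: "u \<in> V - {s} \<Longrightarrow> y \<notin> S u \<and> z \<notin> S u"
  using S_subset fresh(1,2) by auto

lemma is_tree_extended: "is_tree N' A'"
proof -
  have "is_tree N A" using model by (simp add: subtree_model_def)
  then have "is_tree (insert y N) (add_edge A p y)"
    using attach(1) fresh(1) by (rule is_tree_add_leaf)
  then have "is_tree (insert z (insert y N)) (add_edge (add_edge A p y) y z)"
    using fresh by (auto intro: is_tree_add_leaf[OF _ insertI1])
  then show ?thesis by (simp add: N'_def A'_def)
qed

lemma is_subtree_extended: "v \<in> V \<Longrightarrow> is_subtree N' A' (S' v)"
proof (cases "v = s")
  case True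
  have "connected_on (insert z {y}) A'"
    by (rule connected_on_insert[OF connected_on_singleton]) (auto simp: A'_def add_edge_def)
  then show ?thesis using True by (auto simp: is_subtree_def S'_def N'_def insert_commute)
next
  case False
  assume "v \<in> V"
  with False have v: "v \<in> V - {s}" by simp
  then have sub: "S v \<noteq> {}" "S v \<subseteq> N" "connected_on (S v) A"
    using model by (auto simp: subtree_model_def is_subtree_def)
  have conn: "connected_on (S v) A'"
    by (rule connected_on_mono[OF sub(3)]) (simp add: A'_def add_edge_def)
  show ?thesis
  proof (cases "E s v")
    case True
    then have "p \<in> S v" using attach(2) \<open>v \<in> V\<close> by blast
    then have "connected_on (insert y (S v)) A'"
      by (rule connected_on_insert[OF conn]) (auto simp: A'_def add_edge_def)
    then show ?thesis using S'_other[OF v] True sub by (auto simp: is_subtree_def N'_def)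
  next
    case False
    then show ?thesis using S'_other[OF v] conn sub by (auto simp: is_subtree_def N'_def)
  qed
qed

lemma z_in_S'_iff: "u \<in> V \<Longrightarrow> z \<in> S' u \<longleftrightarrow> u = s"
  using fresh_notin_S[of u] fresh(3) by (auto simp: S'_def)

lemma inj_on_S': "inj_on S' V"
proof (rule inj_onI)
  fix u w assume "u \<in> V" "w \<in> V" "S' u = S' w"
  moreover have "inj_on S (V - {s})"
    using model by (simp add: subtree_model_def is_intersection_graph_of_def)
  moreover have "S' u - {y} = S u" if "u \<in> V - {s}" for u
    using S'_other[OF that] fresh_notin_S[OF that] by auto
  ultimately show "u = w" using z_in_S'_iff by (metis DiffI inj_onD singletonD)
qed

lemma intersection_graph_extended: "is_intersection_graph_of V E S'"
proof -
  have meets: "E u v \<longleftrightarrow> S u \<inter> S v \<noteq> {}" if "u \<in> V - {s}" "v \<in> V - {s}" "u \<noteq> v" for u v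
    using model that by (auto simp: subtree_model_def is_intersection_graph_of_def)
  have with_s: "E s v \<longleftrightarrow> S' s \<inter> S' v \<noteq> {}" if "v \<in> V - {s}" for v
    using S'_other[OF that] fresh_notin_S[OF that] by (auto simp: S'_def)
  have "E u w \<longleftrightarrow> S' u \<inter> S' w \<noteq> {}" if uw: "u \<in> V" "w \<in> V" "u \<noteq> w" for u w
  proof -
    consider "u = s" | "w = s" | "u \<in> V - {s}" "w \<in> V - {s}" using uw by blast
    then show ?thesis
    proof cases
      case 1
      then show ?thesis using with_s[of w] uw by simp
    next
      case 2
      then show ?thesis using with_s[of u] uw sym by blast
    next
      case 3
      show ?thesis
      proof (cases "E s u \<and> E s w")
        case True
        then have "E u w" using simplicial uw by (auto simp: simplicial_def clique_def)
        moreover have "y \<in> S' u \<inter> S' w" using True S'_other[OF 3(1)] S'_other[OF 3(2)] by simp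
        ultimately show ?thesis by blast
      next
        case False
        then have "S' u \<inter> S' w = S u \<inter> S w"
          using S'_other[OF 3(1)] S'_other[OF 3(2)] fresh_notin_S[OF 3(1)] fresh_notin_S[OF 3(2)]
          by auto
        then show ?thesis using meets[OF 3 \<open>u \<noteq> w\<close>] by simp
      qed
    qed
  qed
  with inj_on_S' show ?thesis by (simp add: is_intersection_graph_of_def)
qed

lemma card_hit_extended: "v \<in> V \<Longrightarrow> card (T' \<inter> S' v) = 1"
proof (cases "v = s")
  case True
  have "T \<subseteq> N" using model by (simp add: subtree_model_def)
  then have "T' \<inter> S' v = {z}" using True fresh by (auto simp: T'_def S'_def)
  then show ?thesis by simp
next
  case False
  assume "v \<in> V"
  with False have v: "v \<in> V - {s}" by simp
  have "T \<subseteq> N" using model by (simp add: subtree_model_def)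
  then have "T' \<inter> S' v = T \<inter> S v"
    using S'_other[OF v] fresh_notin_S[OF v] fresh by (auto simp: T'_def)
  then show ?thesis using model v by (simp add: subtree_model_def)
qed

lemma clique_common_node_extended:
  assumes "K \<subseteq> V" "clique E K"
  shows "\<exists>q\<in>N'. \<forall>u\<in>K. q \<in> S' u"
proof (cases "s \<in> K")
  case True
  then have "y \<in> S' u" if "u \<in> K" for u
    using that assms(2) by (cases "u = s") (auto simp: S'_def clique_def)
  then show ?thesis by (auto simp: N'_def)
next
  case False
  then have "K \<subseteq> V - {s}" using assms(1) by blast
  moreover have "\<forall>K\<subseteq>V - {s}. clique E K \<longrightarrow> (\<exists>q\<in>N. \<forall>u\<in>K. q \<in> S u)"
    using model by (simp add: subtree_model_def)
  ultimately obtain q where "q \<in> N" "\<forall>u\<in>K. q \<in> S u"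
    using assms(2) by blast
  moreover have "S u \<subseteq> S' u" if "u \<in> K" for u
  proof -
    have "u \<in> V - {s}" using that \<open>K \<subseteq> V - {s}\<close> by blast
    then show ?thesis using S'_other by auto
  qed
  ultimately show ?thesis by (intro bexI[of _ q]) (auto simp: N'_def)
qed

lemma extended_model: "subtree_model V E N' A' S' T'"
proof -
  have "T \<subseteq> N" using model by (simp add: subtree_model_def)
  then have "T' \<subseteq> N'" by (auto simp: T'_def N'_def)
  then show ?thesis
    using is_tree_extended is_subtree_extended intersection_graph_extended card_hit_extended
      clique_common_node_extended
    by (simp add: subtree_model_def)
qed

end

lemma subtree_model_add_simplicial:
  fixes N :: "nat set"
  assumes sym: "\<And>u v. E u v \<Longrightarrow> E v u" and irrefl: "\<And>u. \<not> E u u"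
    and model: "subtree_model (V - {s}) E N A S T" and "simplicial V E s"
  shows "\<exists>(N' :: nat set) A' S' T'. subtree_model V E N' A' S' T'"
proof -
  have "clique E {u \<in> V - {s}. E s u}"
    using \<open>simplicial V E s\<close> by (auto simp: simplicial_def clique_def)
  moreover have "\<forall>K\<subseteq>V - {s}. clique E K \<longrightarrow> (\<exists>p\<in>N. \<forall>u\<in>K. p \<in> S u)"
    using model by (simp add: subtree_model_def)
  moreover have "{u \<in> V - {s}. E s u} \<subseteq> V - {s}" by blast
  ultimately have "\<exists>p\<in>N. \<forall>u\<in>{u \<in> V - {s}. E s u}. p \<in> S u"
    by (elim allE[of _ "{u \<in> V - {s}. E s u}"]) blast
  then obtain p where "p \<in> N" and p: "\<And>u. u \<in> V \<Longrightarrow> E s u \<Longrightarrow> p \<in> S u"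
    using irrefl by auto
  have "finite N" using model by (simp add: subtree_model_def is_tree_def simple_graph_def)
  define y where "y = Suc (Max N)"
  have fresh: "y \<notin> N" "Suc y \<notin> N" "y \<noteq> Suc y"
    using Max_ge[OF \<open>finite N\<close>] by (fastforce simp: y_def)+
  interpret simplicial_extension V E N A S T s p y "Suc y"
    using sym model \<open>simplicial V E s\<close> \<open>p \<in> N\<close> p fresh
    by unfold_locales
  show ?thesis using extended_model by blast
qed

lemma chordal_subtree_model:
  assumes sym: "\<And>u v. E u v \<Longrightarrow> E v u" and irrefl: "\<And>u. \<not> E u u"
  shows "finite V \<Longrightarrow> chordal V E \<Longrightarrow> \<exists>(N :: nat set) A S T. subtree_model V E N A S T"
proof (induction "card V" arbitrary: V rule: less_induct)
  case less
  show ?case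
  proof (cases "V = {}")
    case True
    then show ?thesis using subtree_model_empty[of E "0 :: nat"] by blast
  next
    case False
    then obtain s where "s \<in> V" "simplicial V E s"
      using chordal_has_simplicial[OF sym irrefl less.prems] by blast
    moreover have "card (V - {s}) < card V" "finite (V - {s})" "chordal (V - {s}) E"
      using less.prems card_Diff1_less[OF _ \<open>s \<in> V\<close>] by (auto intro: chordal_subset)
    then obtain N A S T where "subtree_model (V - {s}) E (N :: nat set) A S T"
      using less.hyps by blast
    ultimately show ?thesis using subtree_model_add_simplicial[where E = E, OF sym irrefl] by blast
  qed
qed

definition closed_star :: "('a \<Rightarrow> 'a \<Rightarrow> bool) \<Rightarrow> 'a \<Rightarrow> 'a set set" where
  "closed_star E v = insert {v} {{v, w} | w. E v w}"

lemma singleton_in_closed_star: "{u} \<in> closed_star E v \<longleftrightarrow> u = v"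
  by (auto simp: closed_star_def doubleton_eq_iff)

lemma closed_star_intersection_graph:
  assumes sym: "\<And>u v. E u v \<Longrightarrow> E v u"
  shows "is_intersection_graph_of V E (closed_star E)"
proof -
  have "inj (closed_star E)"
    by (rule injI) (metis singleton_in_closed_star)
  moreover have "E u v \<longleftrightarrow> closed_star E u \<inter> closed_star E v \<noteq> {}" if "u \<noteq> v" for u v
  proof
    assume "E u v"
    then have "{u, v} \<in> closed_star E u \<inter> closed_star E v"
      using sym by (auto simp: closed_star_def insert_commute)
    then show "closed_star E u \<inter> closed_star E v \<noteq> {}" by blast
  next
    assume "closed_star E u \<inter> closed_star E v \<noteq> {}"
    then obtain X where "X \<in> closed_star E u" "X \<in> closed_star E v" by blast
    with \<open>u \<noteq> v\<close> show "E u v" by (auto simp: closed_star_def doubleton_eq_iff)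
  qed
  ultimately show ?thesis by (simp add: is_intersection_graph_of_def inj_on_subset[of _ UNIV])
qed

lemma closed_star_exactly_hittable:
  assumes "simple_graph V E"
  shows "closed_star E ` V \<subseteq> Pow (Pow V)" "exactly_hittable (Pow V) (closed_star E ` V)"
proof -
  show "closed_star E ` V \<subseteq> Pow (Pow V)"
    using assms by (auto simp: closed_star_def simple_graph_def)
  have "(\<lambda>v. {v}) ` V \<inter> closed_star E v = {{v}}" if "v \<in> V" for v
    using that by (auto simp: singleton_in_closed_star)
  then have "\<forall>X\<in>closed_star E ` V. card ((\<lambda>v. {v}) ` V \<inter> X) = 1" by simp
  moreover have "(\<lambda>v. {v}) ` V \<subseteq> Pow V" by blast
  ultimately show "exactly_hittable (Pow V) (closed_star E ` V)"
    unfolding exactly_hittable_def by blast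
qed

lemma intersection_graph_image:
  assumes "is_intersection_graph_of V E S" "inj_on g (\<Union> (S ` V))"
  shows "is_intersection_graph_of V E (\<lambda>v. g ` S v)"
proof -
  have image_Int: "g ` S u \<inter> g ` S v = g ` (S u \<inter> S v)" if "u \<in> V" "v \<in> V" for u v
    using inj_on_image_Int[OF assms(2)] that by blast
  have "inj_on (\<lambda>v. g ` S v) V"
  proof (rule inj_onI)
    fix u v assume "u \<in> V" "v \<in> V" "g ` S u = g ` S v"
    then have "S u = S v" using inj_on_image_eq_iff[OF assms(2)] by blast
    with \<open>u \<in> V\<close> \<open>v \<in> V\<close> assms(1) show "u = v"
      by (auto simp: is_intersection_graph_of_def dest: inj_onD)
  qed
  with assms(1) image_Int show ?thesis by (simp add: is_intersection_graph_of_def)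
qed

lemma exactly_hittable_image:
  assumes "exactly_hittable U F" "inj_on g U" "F \<subseteq> Pow U"
  shows "exactly_hittable (g ` U) ((`) g ` F)"
proof -
  obtain T where "T \<subseteq> U" and hit: "\<And>X. X \<in> F \<Longrightarrow> card (T \<inter> X) = 1"
    using assms(1) by (auto simp: exactly_hittable_def)
  have "card (g ` T \<inter> g ` X) = 1" if "X \<in> F" for X
  proof -
    have "X \<subseteq> U" using that assms(3) by blast
    then have "g ` T \<inter> g ` X = g ` (T \<inter> X)"
      using inj_on_image_Int[OF assms(2) \<open>T \<subseteq> U\<close>] by blast
    moreover have "inj_on g (T \<inter> X)" using \<open>T \<subseteq> U\<close> by (auto intro: inj_on_subset[OF assms(2)])
    ultimately show ?thesis using hit[OF that] by (simp add: card_image)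
  qed
  with \<open>T \<subseteq> U\<close> show ?thesis unfolding exactly_hittable_def by (intro exI[of _ "g ` T"]) auto
qed

lemma simple_graph_intersection_representation:
  assumes "simple_graph V E"
  shows "\<exists>(U :: nat set) S. (\<forall>v\<in>V. S v \<subseteq> U) \<and> is_intersection_graph_of V E S
           \<and> exactly_hittable U (S ` V)"
proof -
  have sym: "\<And>u v. E u v \<Longrightarrow> E v u" and "finite V"
    using assms by (auto simp: simple_graph_def)
  obtain g :: "'a set \<Rightarrow> nat" where g: "inj_on g (Pow V)"
    using finite_imp_inj_to_nat_seg[of "Pow V"] \<open>finite V\<close> by blast
  note stars = closed_star_exactly_hittable[OF assms]
  have "is_intersection_graph_of V E (closed_star E)"
    by (rule closed_star_intersection_graph) (rule sym)
  moreover have "inj_on g (\<Union> (closed_star E ` V))"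
    using stars(1) by (blast intro: inj_on_subset[OF g])
  ultimately have "is_intersection_graph_of V E (\<lambda>v. g ` closed_star E v)"
    by (rule intersection_graph_image)
  moreover have "\<forall>v\<in>V. g ` closed_star E v \<subseteq> g ` Pow V" using stars(1) by blast
  moreover have "exactly_hittable (g ` Pow V) ((\<lambda>v. g ` closed_star E v) ` V)"
    using exactly_hittable_image[OF stars(2) g stars(1)] by (simp only: image_image)
  ultimately show ?thesis by (intro exI conjI)
qed

theorem theorem10:
  fixes V :: "'a set" and E :: "'a \<Rightarrow> 'a \<Rightarrow> bool"
  assumes "simple_graph V E"
  shows "(\<exists>(U :: nat set) S. (\<forall>v\<in>V. S v \<subseteq> U) \<and> is_intersection_graph_of V E S
            \<and> exactly_hittable U (S ` V))
       \<and> (connected_on V E \<and> chordal V E \<longrightarrow>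
          (\<exists>(N :: nat set) A S. is_tree N A \<and> (\<forall>v\<in>V. is_subtree N A (S v))
            \<and> is_intersection_graph_of V E S \<and> exactly_hittable N (S ` V)))"
proof (intro conjI impI)
  show "\<exists>(U :: nat set) S. (\<forall>v\<in>V. S v \<subseteq> U) \<and> is_intersection_graph_of V E S
          \<and> exactly_hittable U (S ` V)"
    using assms by (rule simple_graph_intersection_representation)
next
  assume "connected_on V E \<and> chordal V E"
  then have "chordal V E" ..
  have sym: "\<And>u v. E u v \<Longrightarrow> E v u" and irrefl: "\<And>u. \<not> E u u" and "finite V"
    using assms by (auto simp: simple_graph_def)
  obtain N A S T where "subtree_model V E (N :: nat set) A S T"
    using chordal_subtree_model[where E = E, OF sym irrefl \<open>finite V\<close> \<open>chordal V E\<close>] by blast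
  then have "is_tree N A" "\<forall>v\<in>V. is_subtree N A (S v)" "is_intersection_graph_of V E S"
    "T \<subseteq> N" "\<forall>X\<in>S ` V. card (T \<inter> X) = 1"
    by (simp_all add: subtree_model_def)
  then show "\<exists>(N :: nat set) A S. is_tree N A \<and> (\<forall>v\<in>V. is_subtree N A (S v))
               \<and> is_intersection_graph_of V E S \<and> exactly_hittable N (S ` V)"
    unfolding exactly_hittable_def by blast
qed

end
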